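(* For any persuasive signaling scheme $\varphi$, there exists an identity-independent signaling scheme $\widetilde{\varphi}$ that is persuasive and has $\mathrm{Cost}(\widetilde{\varphi})=\mathrm{Cost}(\varphi)$.
   Context: Setting. $V$ is a finite set of $n$ task types and $W=(W_{u,v})_{u,v\in V}$ is a symmetric matrix with entries in $[0,1]$ and $W_{v,v}=1$. There are $n$ agents; the type profile $t=(t_1,\dots,t_n)$ is a uniformly random bijection $[n]\to V$. A signaling scheme with finite signal space $\Sigma\subset[0,1]$ is a map $\varphi$ assigning to each bijection $t$ a distribution $\varphi(t)$ on $\Sigma^V$; given $t$, $s=(s_v)_{v\in V}\sim\varphi(t)$ is drawn and agent $i$ privately receives $s_{t_i}$. For agent $i$, a signal $\theta\in\Sigma$ with $\Pr[s_{t_i}=\theta]>0$ and $x\ge0$, let $Q_i(x\mid\theta)=\mathbb{E}\big[x+\sum_{v'\neq t_i}W_{t_i,v'}s_{v'}\,\big|\,s_{t_i}=\theta\big]$ (over the joint law of $t,s$). The scheme is persuasive if for every agent $i$ and every such $\theta$: $Q_i(\theta\mid\theta)\ge1$ and $\theta=\min\{x\ge0:Q_i(x\mid\theta)\ge1\}$. $\mathrm{Cost}(\varphi)=\mathbb{E}_{t,\,s\sim\varphi(t)}[\|s\|_1]$. The scheme is identity-independent if there is a distribution $\mathcal{D}_\varphi$ on $\Sigma^V$ with $\varphi(t)=\mathcal{D}_\varphi$ for every bijection $t$. *)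

theory Defs
  imports "HOL-Probability.Probability"
begin

text \<open>Task types: a finite type 'v with n = CARD('v). Agents: {..<n}.
A type profile is a bijection t from {..<n} onto UNIV (extensional outside {..<n}).\<close>

definition type_profiles :: "(nat \<Rightarrow> 'v::finite) set" where
  "type_profiles = {t. bij_betw t {..<CARD('v)} (UNIV :: 'v set) \<and> t \<in> extensional {..<CARD('v)}}"

definition signaling_scheme :: "real set \<Rightarrow> ((nat \<Rightarrow> 'v::finite) \<Rightarrow> ('v \<Rightarrow> real) pmf) \<Rightarrow> bool" where
  "signaling_scheme Sig \<phi> \<longleftrightarrow> finite Sig \<and> Sig \<subseteq> {0..1} \<and>
     (\<forall>t \<in> type_profiles. set_pmf (\<phi> t) \<subseteq> {s. \<forall>v. s v \<in> Sig})"

definition joint :: "((nat \<Rightarrow> 'v::finite) \<Rightarrow> ('v \<Rightarrow> real) pmf) \<Rightarrow> ((nat \<Rightarrow> 'v) \<times> ('v \<Rightarrow> real)) pmf" where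
  "joint \<phi> = bind_pmf (pmf_of_set type_profiles) (\<lambda>t. map_pmf (\<lambda>s. (t, s)) (\<phi> t))"

definition sig_prob :: "((nat \<Rightarrow> 'v::finite) \<Rightarrow> ('v \<Rightarrow> real) pmf) \<Rightarrow> nat \<Rightarrow> real \<Rightarrow> real" where
  "sig_prob \<phi> i \<theta> = measure_pmf.prob (joint \<phi>) {(t, s). s (t i) = \<theta>}"

text \<open>Q_i(x | \<theta>) = E[x + \<Sum>_{v' \<noteq> t_i} W(t_i,v') s_{v'} | s_{t_i} = \<theta>]
(elementary conditional expectation given an event of positive probability).\<close>

definition Q :: "('v::finite \<Rightarrow> 'v \<Rightarrow> real) \<Rightarrow> ((nat \<Rightarrow> 'v) \<Rightarrow> ('v \<Rightarrow> real) pmf) \<Rightarrow> nat \<Rightarrow> real \<Rightarrow> real \<Rightarrow> real" where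
  "Q W \<phi> i x \<theta> =
     measure_pmf.expectation (joint \<phi>)
       (\<lambda>(t, s). indicator {(t', s'). s' (t' i) = \<theta>} (t, s) *
                 (x + (\<Sum>v' \<in> UNIV - {t i}. W (t i) v' * s v')))
     / sig_prob \<phi> i \<theta>"

definition persuasive :: "('v::finite \<Rightarrow> 'v \<Rightarrow> real) \<Rightarrow> real set \<Rightarrow> ((nat \<Rightarrow> 'v) \<Rightarrow> ('v \<Rightarrow> real) pmf) \<Rightarrow> bool" where
  "persuasive W Sig \<phi> \<longleftrightarrow>
     (\<forall>i < CARD('v). \<forall>\<theta> \<in> Sig. sig_prob \<phi> i \<theta> > 0 \<longrightarrow>
        Q W \<phi> i \<theta> \<theta> \<ge> 1 \<and>
        \<theta> = (LEAST x. x \<ge> 0 \<and> Q W \<phi> i x \<theta> \<ge> 1))"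

definition cost :: "((nat \<Rightarrow> 'v::finite) \<Rightarrow> ('v \<Rightarrow> real) pmf) \<Rightarrow> real" where
  "cost \<phi> = measure_pmf.expectation (joint \<phi>) (\<lambda>(t, s). \<Sum>v\<in>UNIV. \<bar>s v\<bar>)"

definition identity_independent :: "((nat \<Rightarrow> 'v::finite) \<Rightarrow> ('v \<Rightarrow> real) pmf) \<Rightarrow> bool" where
  "identity_independent \<phi> \<longleftrightarrow> (\<exists>D. \<forall>t \<in> type_profiles. \<phi> t = D)"

end

theory Submission imports Defs begin

(*
  Let D be the law of the signal vector s under the joint law of (t, s), and let the new scheme
  send D whatever the type profile. The cost only depends on the law of s, so it is unchanged.
  Under the new scheme t is independent of s, and since t is a uniform bijection, agent i's
  quantities P = Pr[s_(t_i) = theta] and M = E[1{s_(t_i) = theta} * sum_(v ~= t_i) W_(t_i,v) s_v]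
  become the averages over all agents j of the corresponding quantities under the old scheme.
  Persuasiveness at theta, multiplied through by P, is the condition M = (1 - theta) P for
  theta > 0 and M >= P for theta = 0; being linear in (P, M), it survives this averaging.
  No property of W is needed.
*)

lemma finite_type_profiles: "finite (type_profiles :: (nat \<Rightarrow> 'v::finite) set)"
proof (rule finite_subset)
  show "type_profiles \<subseteq> PiE {..<CARD('v)} (\<lambda>_. UNIV :: 'v set)"
    unfolding type_profiles_def by (auto simp: PiE_def)
qed (intro finite_PiE; simp)

lemma type_profiles_nonempty: "(type_profiles :: (nat \<Rightarrow> 'v::finite) set) \<noteq> {}"
proof -
  obtain h :: "nat \<Rightarrow> 'v" where h: "bij_betw h {..<CARD('v)} UNIV"
    using ex_bij_betw_nat_finite[of "UNIV :: 'v set"] by (auto simp: atLeast0LessThan)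
  then have "restrict h {..<CARD('v)} \<in> type_profiles"
    unfolding type_profiles_def using bij_betw_cong[of "{..<CARD('v)}" "restrict h _" h] by simp
  then show ?thesis by auto
qed

lemma sum_type_profile:
  fixes G :: "'v::finite \<Rightarrow> 'a::comm_monoid_add"
  assumes "t \<in> type_profiles"
  shows "(\<Sum>j<CARD('v). G (t j)) = (\<Sum>u\<in>UNIV. G u)"
  using assms sum.reindex_bij_betw[of t "{..<CARD('v)}" UNIV G]
  unfolding type_profiles_def by simp

lemma type_profiles_comp_transpose:
  assumes "t \<in> (type_profiles :: (nat \<Rightarrow> 'v::finite) set)" "i < CARD('v)" "j < CARD('v)"
  shows "t \<circ> Transposition.transpose i j \<in> type_profiles"
proof -
  have "bij_betw (Transposition.transpose i j) {..<CARD('v)} {..<CARD('v)}"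
    using assms(2,3)
    by (intro bij_betwI[of _ _ _ "Transposition.transpose i j"]) (auto simp: Transposition.transpose_def)
  then have "bij_betw (t \<circ> Transposition.transpose i j) {..<CARD('v)} UNIV"
    using assms(1) unfolding type_profiles_def by (auto intro: bij_betw_trans)
  moreover have "t \<circ> Transposition.transpose i j \<in> extensional {..<CARD('v)}"
    using assms unfolding type_profiles_def extensional_def Transposition.transpose_def by auto
  ultimately show ?thesis unfolding type_profiles_def by auto
qed

lemma sum_type_profiles_agent_swap:
  fixes F :: "'v::finite \<Rightarrow> 'a::comm_monoid_add"
  assumes "i < CARD('v)" "j < CARD('v)"
  shows "(\<Sum>t\<in>type_profiles. F (t i)) = (\<Sum>t\<in>type_profiles. F (t j))"
  by (rule sum.reindex_bij_witness[of _ "\<lambda>t. t \<circ> Transposition.transpose i j"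
        "\<lambda>t. t \<circ> Transposition.transpose i j"])
    (simp_all add: fun_eq_iff type_profiles_comp_transpose assms)

lemma sum_type_profiles_agent:
  fixes F :: "'v::finite \<Rightarrow> real"
  assumes "i < CARD('v)"
  shows "(\<Sum>t\<in>type_profiles. F (t i)) =
           card (type_profiles :: (nat \<Rightarrow> 'v) set) / CARD('v) * (\<Sum>u\<in>UNIV. F u)"
proof -
  have "CARD('v) * (\<Sum>t\<in>type_profiles. F (t i)) =
          (\<Sum>j<CARD('v). \<Sum>t\<in>type_profiles. F (t i))"
    by simp
  also have "\<dots> = (\<Sum>j<CARD('v). \<Sum>t\<in>type_profiles. F (t j))"
    by (rule sum.cong[OF refl]) (simp add: sum_type_profiles_agent_swap[OF assms])
  also have "\<dots> = (\<Sum>t\<in>(type_profiles :: (nat \<Rightarrow> 'v) set). \<Sum>u\<in>UNIV. F u)"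
    by (subst sum.swap) (simp add: sum_type_profile)
  finally show ?thesis by (simp add: field_simps)
qed

lemma set_pmf_joint: "set_pmf (joint \<phi>) = (SIGMA t:type_profiles. set_pmf (\<phi> t))"
  unfolding joint_def
  by (auto simp: set_pmf_of_set[OF type_profiles_nonempty finite_type_profiles])

lemma finite_set_pmf_joint:
  assumes "\<And>t. t \<in> type_profiles \<Longrightarrow> finite (set_pmf (\<phi> t))"
  shows "finite (set_pmf (joint \<phi>))"
  unfolding set_pmf_joint using assms by (intro finite_SigmaI finite_type_profiles)

lemma expectation_joint:
  fixes \<phi> :: "(nat \<Rightarrow> 'v::finite) \<Rightarrow> ('v \<Rightarrow> real) pmf"
  assumes "\<And>t. t \<in> type_profiles \<Longrightarrow> finite (set_pmf (\<phi> t))"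
  shows "measure_pmf.expectation (joint \<phi>) g =
           (\<Sum>t\<in>type_profiles. measure_pmf.expectation (\<phi> t) (\<lambda>s. g (t, s)))
             / card (type_profiles :: (nat \<Rightarrow> 'v) set)"
  unfolding joint_def using assms
  by (simp add: pmf_expectation_bind_pmf_of_set type_profiles_nonempty finite_type_profiles
      divide_inverse_commute sum_distrib_left)

definition signal_marginal ::
  "((nat \<Rightarrow> 'v::finite) \<Rightarrow> ('v \<Rightarrow> real) pmf) \<Rightarrow> ('v \<Rightarrow> real) pmf" where
  "signal_marginal \<phi> = map_pmf snd (joint \<phi>)"

definition agent_expectation ::
  "((nat \<Rightarrow> 'v::finite) \<Rightarrow> ('v \<Rightarrow> real) pmf) \<Rightarrow> ('v \<Rightarrow> ('v \<Rightarrow> real) \<Rightarrow> real) \<Rightarrow> nat \<Rightarrow> real" where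
  "agent_expectation \<phi> f i = measure_pmf.expectation (joint \<phi>) (\<lambda>(t, s). f (t i) s)"

lemma finite_set_pmf_signal_marginal:
  assumes "\<And>t. t \<in> type_profiles \<Longrightarrow> finite (set_pmf (\<phi> t))"
  shows "finite (set_pmf (signal_marginal \<phi>))"
  unfolding signal_marginal_def using finite_set_pmf_joint[OF assms] by simp

lemma agent_expectation_const:
  fixes D :: "('v::finite \<Rightarrow> real) pmf"
  assumes "finite (set_pmf D)" "i < CARD('v)"
  shows "agent_expectation (\<lambda>_. D) f i =
           measure_pmf.expectation D (\<lambda>s. \<Sum>u\<in>UNIV. f u s) / CARD('v)"
proof -
  have "card (type_profiles :: (nat \<Rightarrow> 'v) set) > 0"
    using finite_type_profiles type_profiles_nonempty by (simp add: card_gt_0_iff)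
  then have "agent_expectation (\<lambda>_. D) f i =
               (\<Sum>u\<in>UNIV. measure_pmf.expectation D (f u)) / CARD('v)"
    unfolding agent_expectation_def
    by (simp add: expectation_joint assms
        sum_type_profiles_agent[OF assms(2), of "\<lambda>u. measure_pmf.expectation D (f u)"])
  also have "(\<Sum>u\<in>UNIV. measure_pmf.expectation D (f u)) =
               measure_pmf.expectation D (\<lambda>s. \<Sum>u\<in>UNIV. f u s)"
    by (simp add: integrable_measure_pmf_finite assms)
  finally show ?thesis .
qed

lemma sum_agent_expectation:
  fixes \<phi> :: "(nat \<Rightarrow> 'v::finite) \<Rightarrow> ('v \<Rightarrow> real) pmf"
  assumes fin: "\<And>t. t \<in> type_profiles \<Longrightarrow> finite (set_pmf (\<phi> t))"
  shows "(\<Sum>j<CARD('v). agent_expectation \<phi> f j) =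
           measure_pmf.expectation (signal_marginal \<phi>) (\<lambda>s. \<Sum>u\<in>UNIV. f u s)"
proof -
  have "(\<Sum>j<CARD('v). agent_expectation \<phi> f j) =
          measure_pmf.expectation (joint \<phi>) (\<lambda>(t, s). \<Sum>j<CARD('v). f (t j) s)"
    unfolding agent_expectation_def case_prod_unfold
    by (simp add: integrable_measure_pmf_finite finite_set_pmf_joint fin)
  also have "\<dots> = measure_pmf.expectation (joint \<phi>) (\<lambda>(t, s). \<Sum>u\<in>UNIV. f u s)"
  proof (intro integral_cong_AE AE_pmfI)
    fix y assume "y \<in> set_pmf (joint \<phi>)"
    then show "(\<lambda>(t, s). \<Sum>j<CARD('v). f (t j) s) y = (\<lambda>(t, s). \<Sum>u\<in>UNIV. f u s) y"
      using sum_type_profile[of "fst y" "\<lambda>u. f u (snd y)"] by (auto simp: set_pmf_joint)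
  qed simp_all
  also have "\<dots> = measure_pmf.expectation (signal_marginal \<phi>) (\<lambda>s. \<Sum>u\<in>UNIV. f u s)"
    unfolding signal_marginal_def by (simp add: case_prod_unfold)
  finally show ?thesis .
qed

lemma agent_expectation_signal_marginal:
  fixes \<phi> :: "(nat \<Rightarrow> 'v::finite) \<Rightarrow> ('v \<Rightarrow> real) pmf"
  assumes "\<And>t. t \<in> type_profiles \<Longrightarrow> finite (set_pmf (\<phi> t))" "i < CARD('v)"
  shows "agent_expectation (\<lambda>_. signal_marginal \<phi>) f i =
           (\<Sum>j<CARD('v). agent_expectation \<phi> f j) / CARD('v)"
  by (simp add: agent_expectation_const sum_agent_expectation finite_set_pmf_signal_marginal assms)

lemma sig_prob_eq_agent_expectation:
  "sig_prob \<phi> i \<theta> = agent_expectation \<phi> (\<lambda>u s. of_bool (s u = \<theta>)) i"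
proof -
  have "sig_prob \<phi> i \<theta> = measure_pmf.expectation (joint \<phi>) (indicator {(t, s). s (t i) = \<theta>})"
    unfolding sig_prob_def by (simp add: measure_pmf.emeasure_eq_measure)
  also have "indicator {(t, s). s (t i) = \<theta>} = (\<lambda>(t, s). of_bool (s (t i) = \<theta>) :: real)"
    by (auto simp: fun_eq_iff indicator_def)
  finally show ?thesis unfolding agent_expectation_def .
qed

lemma sig_prob_signal_marginal:
  fixes \<phi> :: "(nat \<Rightarrow> 'v::finite) \<Rightarrow> ('v \<Rightarrow> real) pmf"
  assumes "\<And>t. t \<in> type_profiles \<Longrightarrow> finite (set_pmf (\<phi> t))" "i < CARD('v)"
  shows "sig_prob (\<lambda>_. signal_marginal \<phi>) i \<theta> =
           (\<Sum>j<CARD('v). sig_prob \<phi> j \<theta>) / CARD('v)"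
  unfolding sig_prob_eq_agent_expectation by (rule agent_expectation_signal_marginal[OF assms])

definition peer_contribution ::
  "('v::finite \<Rightarrow> 'v \<Rightarrow> real) \<Rightarrow> real \<Rightarrow> 'v \<Rightarrow> ('v \<Rightarrow> real) \<Rightarrow> real" where
  "peer_contribution W \<theta> u s = of_bool (s u = \<theta>) * (\<Sum>v\<in>UNIV - {u}. W u v * s v)"

lemma Q_eq_agent_expectation:
  assumes "\<And>t. t \<in> type_profiles \<Longrightarrow> finite (set_pmf (\<phi> t))" "sig_prob \<phi> i \<theta> > 0"
  shows "Q W \<phi> i x \<theta> = x + agent_expectation \<phi> (peer_contribution W \<theta>) i / sig_prob \<phi> i \<theta>"
proof -
  have integrand: "(\<lambda>(t, s). indicator {(t', s'). s' (t' i) = \<theta>} (t, s) *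
                      (x + (\<Sum>v\<in>UNIV - {t i}. W (t i) v * s v))) =
          (\<lambda>y. x * (\<lambda>(t, s). of_bool (s (t i) = \<theta>)) y +
               (\<lambda>(t, s). peer_contribution W \<theta> (t i) s) y)"
    by (auto simp: fun_eq_iff peer_contribution_def indicator_def)
  have "Q W \<phi> i x \<theta> =
          (x * sig_prob \<phi> i \<theta> + agent_expectation \<phi> (peer_contribution W \<theta>) i) / sig_prob \<phi> i \<theta>"
    unfolding Q_def integrand sig_prob_eq_agent_expectation agent_expectation_def
    by (simp add: integrable_measure_pmf_finite finite_set_pmf_joint assms(1))
  then show ?thesis
    using assms(2) by (simp add: field_simps)
qed

lemma agent_expectation_peer_contribution_null:
  assumes "sig_prob \<phi> i \<theta> = 0"
  shows "agent_expectation \<phi> (peer_contribution W \<theta>) i = 0"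
  using assms unfolding sig_prob_def agent_expectation_def peer_contribution_def
  by (intro integral_eq_zero_AE) (auto simp: AE_measure_pmf_iff measure_pmf_zero_iff)

definition persuasion_balance :: "real \<Rightarrow> real \<Rightarrow> real \<Rightarrow> bool" where
  "persuasion_balance \<theta> P M \<longleftrightarrow> (if \<theta> = 0 then P \<le> M else M = (1 - \<theta>) * P)"

lemma persuasion_balance_iff:
  assumes "0 \<le> \<theta>" "0 < P"
  shows "persuasion_balance \<theta> P M \<longleftrightarrow> \<theta> = max 0 (1 - M / P)"
proof (cases "\<theta> = 0")
  case True
  then show ?thesis
    using assms by (auto simp: persuasion_balance_def field_simps max_def)
next
  case False
  then have "\<theta> = max 0 (1 - M / P) \<longleftrightarrow> \<theta> = 1 - M / P"
    using assms(1) by (auto simp: max_def)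
  also have "\<dots> \<longleftrightarrow> M = (1 - \<theta>) * P"
    using assms(2) by (auto simp: field_simps)
  finally show ?thesis
    using False by (simp add: persuasion_balance_def)
qed

lemma persuasion_balance_sum:
  assumes "\<And>j. j \<in> J \<Longrightarrow> persuasion_balance \<theta> (P j) (M j)"
  shows "persuasion_balance \<theta> (\<Sum>j\<in>J. P j) (\<Sum>j\<in>J. M j)"
  using assms unfolding persuasion_balance_def by (auto intro: sum_mono simp: sum_distrib_left)

lemma persuasion_balance_divide:
  assumes "persuasion_balance \<theta> P M" "0 \<le> c"
  shows "persuasion_balance \<theta> (P / c) (M / c)"
  using assms unfolding persuasion_balance_def by (auto intro: divide_right_mono)

lemma Least_nonneg_add_ge_one: "(LEAST x::real. 0 \<le> x \<and> 1 \<le> x + c) = max 0 (1 - c)"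
  by (rule Least_equality) auto

lemma signaling_scheme_finite_support:
  fixes \<phi> :: "(nat \<Rightarrow> 'v::finite) \<Rightarrow> ('v \<Rightarrow> real) pmf"
  assumes "signaling_scheme Sig \<phi>" "t \<in> type_profiles"
  shows "finite (set_pmf (\<phi> t))"
proof (rule finite_subset)
  show "set_pmf (\<phi> t) \<subseteq> PiE (UNIV :: 'v set) (\<lambda>_. Sig)"
    using assms unfolding signaling_scheme_def by (auto simp: PiE_UNIV_domain)
  show "finite (PiE (UNIV :: 'v set) (\<lambda>_. Sig))"
    using assms(1) unfolding signaling_scheme_def by (intro finite_PiE) auto
qed

lemma persuasive_iff_persuasion_balance:
  fixes \<phi> :: "(nat \<Rightarrow> 'v::finite) \<Rightarrow> ('v \<Rightarrow> real) pmf"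
  assumes scheme: "signaling_scheme Sig \<phi>"
  shows "persuasive W Sig \<phi> \<longleftrightarrow>
           (\<forall>i<CARD('v). \<forall>\<theta>\<in>Sig.
              persuasion_balance \<theta> (sig_prob \<phi> i \<theta>) (agent_expectation \<phi> (peer_contribution W \<theta>) i))"
proof -
  have clause: "(sig_prob \<phi> i \<theta> > 0 \<longrightarrow>
           Q W \<phi> i \<theta> \<theta> \<ge> 1 \<and> \<theta> = (LEAST x. x \<ge> 0 \<and> Q W \<phi> i x \<theta> \<ge> 1)) \<longleftrightarrow>
        persuasion_balance \<theta> (sig_prob \<phi> i \<theta>) (agent_expectation \<phi> (peer_contribution W \<theta>) i)"
    if "\<theta> \<in> Sig" for i \<theta>
  proof (cases "sig_prob \<phi> i \<theta> = 0")
    case True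
    then show ?thesis
      by (simp add: agent_expectation_peer_contribution_null persuasion_balance_def)
  next
    case False
    define c where "c = agent_expectation \<phi> (peer_contribution W \<theta>) i / sig_prob \<phi> i \<theta>"
    have P: "sig_prob \<phi> i \<theta> > 0"
      using False measure_nonneg[of "joint \<phi>"] unfolding sig_prob_def by (simp add: less_le)
    have "0 \<le> \<theta>"
      using scheme \<open>\<theta> \<in> Sig\<close> unfolding signaling_scheme_def by auto
    have Q: "Q W \<phi> i x \<theta> = x + c" for x
      unfolding c_def using signaling_scheme_finite_support[OF scheme] P
      by (rule Q_eq_agent_expectation)
    have "(LEAST x. x \<ge> 0 \<and> Q W \<phi> i x \<theta> \<ge> 1) = max 0 (1 - c)"
      unfolding Q by (rule Least_nonneg_add_ge_one)
    then show ?thesis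
      unfolding persuasion_balance_iff[OF \<open>0 \<le> \<theta>\<close> P] c_def[symmetric] Q using P by auto
  qed
  show ?thesis
    unfolding persuasive_def by (simp add: clause)
qed

lemma signaling_scheme_signal_marginal:
  "signaling_scheme Sig \<phi> \<Longrightarrow> signaling_scheme Sig (\<lambda>_. signal_marginal \<phi>)"
  unfolding signaling_scheme_def signal_marginal_def by (force simp: set_pmf_joint)

lemma cost_signal_marginal:
  fixes \<phi> :: "(nat \<Rightarrow> 'v::finite) \<Rightarrow> ('v \<Rightarrow> real) pmf"
  assumes "\<And>t. t \<in> type_profiles \<Longrightarrow> finite (set_pmf (\<phi> t))"
  shows "cost (\<lambda>_. signal_marginal \<phi>) = cost \<phi>"
proof -
  have "card (type_profiles :: (nat \<Rightarrow> 'v) set) > 0"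
    using finite_type_profiles type_profiles_nonempty by (simp add: card_gt_0_iff)
  then have "cost (\<lambda>_. signal_marginal \<phi>) =
               measure_pmf.expectation (signal_marginal \<phi>) (\<lambda>s. \<Sum>v\<in>UNIV. \<bar>s v\<bar>)"
    unfolding cost_def by (simp add: expectation_joint finite_set_pmf_signal_marginal assms)
  also have "\<dots> = cost \<phi>"
    unfolding cost_def signal_marginal_def by (simp add: case_prod_unfold)
  finally show ?thesis .
qed

lemma persuasive_signal_marginal:
  fixes \<phi> :: "(nat \<Rightarrow> 'v::finite) \<Rightarrow> ('v \<Rightarrow> real) pmf"
  assumes scheme: "signaling_scheme Sig \<phi>" and pers: "persuasive W Sig \<phi>"
  shows "persuasive W Sig (\<lambda>_. signal_marginal \<phi>)"
  unfolding persuasive_iff_persuasion_balance[OF signaling_scheme_signal_marginal[OF scheme]]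
proof (intro allI impI ballI)
  let ?\<psi> = "\<lambda>_. signal_marginal \<phi>"
  fix i \<theta> assume i: "i < CARD('v)" and "\<theta> \<in> Sig"
  have fin: "\<And>t. t \<in> type_profiles \<Longrightarrow> finite (set_pmf (\<phi> t))"
    by (rule signaling_scheme_finite_support[OF scheme])
  have balance: "persuasion_balance \<theta> (sig_prob \<phi> j \<theta>) (agent_expectation \<phi> (peer_contribution W \<theta>) j)"
    if "j < CARD('v)" for j
    using pers that \<open>\<theta> \<in> Sig\<close> unfolding persuasive_iff_persuasion_balance[OF scheme] by blast
  have P: "sig_prob ?\<psi> i \<theta> = (\<Sum>j<CARD('v). sig_prob \<phi> j \<theta>) / CARD('v)"
    by (rule sig_prob_signal_marginal[OF fin i])
  have M: "agent_expectation ?\<psi> (peer_contribution W \<theta>) i =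
             (\<Sum>j<CARD('v). agent_expectation \<phi> (peer_contribution W \<theta>) j) / CARD('v)"
    by (rule agent_expectation_signal_marginal[OF fin i])
  show "persuasion_balance \<theta> (sig_prob ?\<psi> i \<theta>) (agent_expectation ?\<psi> (peer_contribution W \<theta>) i)"
    unfolding P M by (intro persuasion_balance_divide persuasion_balance_sum balance) simp_all
qed

theorem lemma2p1:
  fixes W :: "'v::finite \<Rightarrow> 'v \<Rightarrow> real"
    and Sig :: "real set"
    and \<phi> :: "(nat \<Rightarrow> 'v) \<Rightarrow> ('v \<Rightarrow> real) pmf"
  assumes W_sym: "\<And>u v. W u v = W v u"
    and W_range: "\<And>u v. 0 \<le> W u v \<and> W u v \<le> 1"
    and W_diag: "\<And>v. W v v = 1"
    and scheme: "signaling_scheme Sig \<phi>"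
    and pers: "persuasive W Sig \<phi>"
  shows "\<exists>Sig' (\<psi> :: (nat \<Rightarrow> 'v) \<Rightarrow> ('v \<Rightarrow> real) pmf).
           signaling_scheme Sig' \<psi> \<and> identity_independent \<psi> \<and>
           persuasive W Sig' \<psi> \<and> cost \<psi> = cost \<phi>"
proof (intro exI conjI)
  show "signaling_scheme Sig (\<lambda>_. signal_marginal \<phi>)"
    by (rule signaling_scheme_signal_marginal[OF scheme])
  show "identity_independent (\<lambda>_. signal_marginal \<phi>)"
    unfolding identity_independent_def by blast
  show "persuasive W Sig (\<lambda>_. signal_marginal \<phi>)"
    by (rule persuasive_signal_marginal[OF scheme pers])
  show "cost (\<lambda>_. signal_marginal \<phi>) = cost \<phi>"
    by (rule cost_signal_marginal[OF signaling_scheme_finite_support[OF scheme]])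
qed

end
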